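(* The logic $\mathsf{CK}\oplus\mathsf{C}_\Diamond\oplus\mathsf{N}_\Diamond$ is a conservative extension of $\mathsf{CK}_\Box$: a $\Diamond$-free formula is derivable in $\mathsf{CK}\oplus\mathsf{C}_\Diamond\oplus\mathsf{N}_\Diamond$ if and only if it is a theorem of $\mathsf{CK}_\Box$.
   Context: Formulas: $\mathbf{L}$ is generated from a countably infinite set of propositional variables by $\varphi ::= p \mid \bot \mid \varphi\wedge\varphi \mid \varphi\vee\varphi \mid \varphi\to\varphi \mid \Box\varphi \mid \Diamond\varphi$. Axioms: $\mathsf{K}_\Box$: $\Box(\varphi\to\psi)\to(\Box\varphi\to\Box\psi)$; $\mathsf{K}_\Diamond$: $\Box(\varphi\to\psi)\to(\Diamond\varphi\to\Diamond\psi)$; $\mathsf{N}_\Diamond$: $\Diamond\bot\to\bot$; $\mathsf{C}_\Diamond$: $\Diamond(\varphi\vee\psi)\to\Diamond\varphi\vee\Diamond\psi$. For a set $\mathsf{Ax}$ of axioms, $\mathsf{CK}\oplus\mathsf{Ax}$ is the relation $\Gamma\vdash_{\mathsf{Ax}}\varphi$ inductively generated by: (Ax) $\Gamma\vdash\varphi$ whenever $\varphi$ is a substitution instance of an axiom of a standard Hilbert axiomatisation of intuitionistic propositional logic, of $\mathsf{K}_\Box$, of $\mathsf{K}_\Diamond$, or of an element of $\mathsf{Ax}$; (El) $\Gamma\vdash\varphi$ if $\varphi\in\Gamma$; (MP) from $\Gamma\vdash\varphi$ and $\Gamma\vdash\varphi\to\psi$ infer $\Gamma\vdash\psi$; (Nec)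 from $\emptyset\vdash\varphi$ infer $\Gamma\vdash\Box\varphi$. A formula is derivable if $\emptyset\vdash_{\mathsf{Ax}}\varphi$. $\mathsf{CK}_\Box$ is the logic on $\Diamond$-free formulas axiomatised by intuitionistic propositional logic plus $\mathsf{K}_\Box$, closed under modus ponens and necessitation. A logic is a conservative extension of $\mathsf{CK}_\Box$ if its derivable $\Diamond$-free formulas are exactly the theorems of $\mathsf{CK}_\Box$. *)

theory Defs
  imports Main
begin

datatype form =
    Var nat
  | Bot
  | And form form
  | Or form form
  | Imp form form
  | Box form
  | Dia form

fun subst :: "(nat \<Rightarrow> form) \<Rightarrow> form \<Rightarrow> form" where
  "subst s (Var n) = s n"
| "subst s Bot = Bot"
| "subst s (And a b) = And (subst s a) (subst s b)"
| "subst s (Or a b) = Or (subst s a) (subst s b)"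
| "subst s (Imp a b) = Imp (subst s a) (subst s b)"
| "subst s (Box a) = Box (subst s a)"
| "subst s (Dia a) = Dia (subst s a)"

fun dia_free :: "form \<Rightarrow> bool" where
  "dia_free (Var n) = True"
| "dia_free Bot = True"
| "dia_free (And a b) = (dia_free a \<and> dia_free b)"
| "dia_free (Or a b) = (dia_free a \<and> dia_free b)"
| "dia_free (Imp a b) = (dia_free a \<and> dia_free b)"
| "dia_free (Box a) = dia_free a"
| "dia_free (Dia a) = False"

abbreviation "p0 \<equiv> Var 0"
abbreviation "p1 \<equiv> Var 1"
abbreviation "p2 \<equiv> Var 2"

text \<open>A standard Hilbert axiomatisation of intuitionistic propositional logic
  (as schemata written with the variables p0, p1, p2).\<close>
definition IPC_axioms :: "form set" where
  "IPC_axioms = {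
     Imp p0 (Imp p1 p0),
     Imp (Imp p0 (Imp p1 p2)) (Imp (Imp p0 p1) (Imp p0 p2)),
     Imp (And p0 p1) p0,
     Imp (And p0 p1) p1,
     Imp p0 (Imp p1 (And p0 p1)),
     Imp p0 (Or p0 p1),
     Imp p1 (Or p0 p1),
     Imp (Imp p0 p2) (Imp (Imp p1 p2) (Imp (Or p0 p1) p2)),
     Imp Bot p0 }"

definition K_box :: form where
  "K_box = Imp (Box (Imp p0 p1)) (Imp (Box p0) (Box p1))"

definition K_dia :: form where
  "K_dia = Imp (Box (Imp p0 p1)) (Imp (Dia p0) (Dia p1))"

definition N_dia :: form where
  "N_dia = Imp (Dia Bot) Bot"

definition C_dia :: form where
  "C_dia = Imp (Dia (Or p0 p1)) (Or (Dia p0) (Dia p1))"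

inductive deriv :: "form set \<Rightarrow> form set \<Rightarrow> form \<Rightarrow> bool" where
  ax: "\<phi> \<in> IPC_axioms \<union> {K_box, K_dia} \<union> Ax \<Longrightarrow> deriv Ax \<Gamma> (subst s \<phi>)"
| el: "\<phi> \<in> \<Gamma> \<Longrightarrow> deriv Ax \<Gamma> \<phi>"
| mp: "deriv Ax \<Gamma> \<phi> \<Longrightarrow> deriv Ax \<Gamma> (Imp \<phi> \<psi>) \<Longrightarrow> deriv Ax \<Gamma> \<psi>"
| nec: "deriv Ax {} \<phi> \<Longrightarrow> deriv Ax \<Gamma> (Box \<phi>)"

inductive CKbox :: "form \<Rightarrow> bool" where
  ax: "\<phi> \<in> IPC_axioms \<union> {K_box} \<Longrightarrow> (\<forall>n. dia_free (s n)) \<Longrightarrow> CKbox (subst s \<phi>)"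
| mp: "CKbox \<phi> \<Longrightarrow> CKbox (Imp \<phi> \<psi>) \<Longrightarrow> dia_free \<psi> \<Longrightarrow> CKbox \<psi>"
| nec: "CKbox \<phi> \<Longrightarrow> CKbox (Box \<phi>)"

end

theory Submission
  imports Defs
begin

text \<open>Replacing every subformula \<open>\<Diamond>\<psi>\<close> by \<open>\<bottom>\<close> leaves \<open>\<Diamond>\<close>-free formulas fixed and sends
  every axiom of \<open>CK \<oplus> C\<^sub>\<Diamond> \<oplus> N\<^sub>\<Diamond>\<close> to a theorem of \<open>CK\<^sub>\<Box>\<close>: \<open>K\<^sub>\<Diamond>\<close> becomes
  \<open>\<Box>(\<phi>\<rightarrow>\<psi>) \<rightarrow> (\<bottom> \<rightarrow> \<bottom>)\<close>, while \<open>C\<^sub>\<Diamond>\<close> and \<open>N\<^sub>\<Diamond>\<close> become instances of ex falso.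
  Since the erasure commutes with the rules, every derivable \<open>\<Diamond>\<close>-free formula is a
  \<open>CK\<^sub>\<Box>\<close>-theorem; the converse inclusion is immediate.\<close>

fun erase_dia :: "form \<Rightarrow> form" where
  "erase_dia (Var n) = Var n"
| "erase_dia Bot = Bot"
| "erase_dia (And a b) = And (erase_dia a) (erase_dia b)"
| "erase_dia (Or a b) = Or (erase_dia a) (erase_dia b)"
| "erase_dia (Imp a b) = Imp (erase_dia a) (erase_dia b)"
| "erase_dia (Box a) = Box (erase_dia a)"
| "erase_dia (Dia a) = Bot"

lemma dia_free_erase_dia: "dia_free (erase_dia \<phi>)"
  by (induction \<phi>) auto

lemma erase_dia_ident: "dia_free \<phi> \<Longrightarrow> erase_dia \<phi> = \<phi>"
  by (induction \<phi>) auto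

lemma erase_dia_subst: "dia_free \<phi> \<Longrightarrow> erase_dia (subst s \<phi>) = subst (erase_dia \<circ> s) \<phi>"
  by (induction \<phi>) auto

lemma dia_free_subst: "dia_free \<phi> \<Longrightarrow> \<forall>n. dia_free (s n) \<Longrightarrow> dia_free (subst s \<phi>)"
  by (induction \<phi>) auto

lemma dia_free_IPC_axioms: "\<phi> \<in> IPC_axioms \<union> {K_box} \<Longrightarrow> dia_free \<phi>"
  by (auto simp: IPC_axioms_def K_box_def)

lemma CKbox_dia_free: "CKbox \<phi> \<Longrightarrow> dia_free \<phi>"
  by (induction rule: CKbox.induct) (auto intro: dia_free_subst dia_free_IPC_axioms)

lemma CKbox_ex_falso: "dia_free \<psi> \<Longrightarrow> CKbox (Imp Bot \<psi>)"
  using CKbox.ax[of "Imp Bot p0" "\<lambda>_. \<psi>"] by (simp add: IPC_axioms_def)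

lemma CKbox_weaken:
  assumes "CKbox \<psi>" and "dia_free \<chi>"
  shows "CKbox (Imp \<chi> \<psi>)"
proof -
  let ?s = "\<lambda>n. if n = 0 then \<psi> else \<chi>"
  have "CKbox (subst ?s (Imp p0 (Imp p1 p0)))"
    by (rule CKbox.ax) (auto simp: IPC_axioms_def assms CKbox_dia_free)
  then have "CKbox (Imp \<psi> (Imp \<chi> \<psi>))" by simp
  from CKbox.mp[OF assms(1) this] show ?thesis
    using assms by (simp add: CKbox_dia_free)
qed

lemma CKbox_erase_dia_axiom:
  assumes "\<phi> \<in> IPC_axioms \<union> {K_box, K_dia} \<union> Ax" and "Ax \<subseteq> {C_dia, N_dia}"
  shows "CKbox (erase_dia (subst s \<phi>))"
proof (cases "\<phi> \<in> IPC_axioms \<union> {K_box}")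
  case True
  then have "CKbox (subst (erase_dia \<circ> s) \<phi>)"
    by (intro CKbox.ax) (auto simp: dia_free_erase_dia)
  with True show ?thesis by (simp add: erase_dia_subst dia_free_IPC_axioms)
next
  case False
  with assms have "\<phi> = K_dia \<or> \<phi> = C_dia \<or> \<phi> = N_dia" by auto
  then show ?thesis
  proof (elim disjE)
    assume "\<phi> = K_dia"
    have "CKbox (Imp Bot Bot)" by (simp add: CKbox_ex_falso)
    with \<open>\<phi> = K_dia\<close> show ?thesis
      by (simp add: K_dia_def CKbox_weaken dia_free_erase_dia)
  qed (simp_all add: C_dia_def N_dia_def CKbox_ex_falso)
qed

theorem CKbox_erase_dia_deriv:
  assumes "deriv Ax \<Gamma> \<phi>" and "Ax \<subseteq> {C_dia, N_dia}" and "\<forall>\<psi>\<in>\<Gamma>. CKbox (erase_dia \<psi>)"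
  shows "CKbox (erase_dia \<phi>)"
  using assms
proof (induction rule: deriv.induct)
  case (ax \<phi> Ax \<Gamma> s)
  then show ?case by (simp add: CKbox_erase_dia_axiom)
next
  case (el \<phi> \<Gamma> Ax)
  then show ?case by simp
next
  case (mp Ax \<Gamma> \<phi> \<psi>)
  then show ?case by (auto intro: CKbox.mp dia_free_erase_dia)
next
  case (nec Ax \<phi> \<Gamma>)
  then show ?case by (auto intro: CKbox.nec)
qed

theorem CKbox_imp_deriv: "CKbox \<phi> \<Longrightarrow> deriv Ax \<Gamma> \<phi>"
proof (induction arbitrary: \<Gamma> rule: CKbox.induct)
  case (ax \<phi> s)
  then show ?case by (intro deriv.ax) auto
next
  case (mp \<phi> \<psi>)
  then show ?case by (blast intro: deriv.mp)
next
  case (nec \<phi>)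
  then show ?case by (blast intro: deriv.nec)
qed

theorem mainTheorem12:
  shows "\<forall>\<phi>. dia_free \<phi> \<longrightarrow> (deriv {C_dia, N_dia} {} \<phi> \<longleftrightarrow> CKbox \<phi>)"
proof (intro allI impI iffI)
  fix \<phi>
  assume "dia_free \<phi>" and "deriv {C_dia, N_dia} {} \<phi>"
  then show "CKbox \<phi>"
    using CKbox_erase_dia_deriv[of "{C_dia, N_dia}" "{}" \<phi>] by (simp add: erase_dia_ident)
next
  fix \<phi>
  assume "CKbox \<phi>"
  then show "deriv {C_dia, N_dia} {} \<phi>" by (rule CKbox_imp_deriv)
qed

end
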